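(* Suppose there exist a language $g\in\mathbf{E}$ and $\iota>0$ such that, for every $n$, every Boolean circuit computing $g|_n$ has size at least $2^{\iota n}$. Then for every $\gamma>0$ there exists $c\in\mathbb{N}^+$ such that, as $n\to\infty$, $$\sup\left\{\frac{|f|_{\mathcal{C}}}{|f|_{\mathcal{U}^c}}: f\in H^n,\ |f|_{\mathcal{U}^c}<+\infty\right\}\in\Omega(n^{1+\gamma}).$$
   Context: Let $\mathcal{B}=\{0,1\}$, let $\mathcal{B}^*$ be the set of finite binary strings and $|h|$ the length of $h\in\mathcal{B}^*$. For $n\in\mathbb{N}^+$, $H^n$ is the set of all functions $\mathcal{B}^n\to\mathcal{B}$. An interpreter is a Turing machine computing a partial function $\varphi:\mathcal{B}^*\times\mathcal{B}^*\to\mathcal{B}\cup\{\bot\}$, where $\bot$ denotes non-halting (or invalid) output. For $f\in H^n$, $|f|_\varphi=\min\{|h|:\varphi(h,x)=f(x)\ \forall x\in\mathcal{B}^n\}$ ($+\infty$ if no such $h$). Turing machines have alphabet $\{0,1,b\}$ ($b$ blank), a finite state set containing an initial state and two final states accept/reject; the output is $1$ if halting in accept, $0$ if halting in reject, $\bot$ otherwise; multi-tape machines have read-only input tapes and read/write work tapes, and the transition function is a finite list of rules. $E(T)$ is a fixed prefix-free binary encoding of a machine $T$ listing its rules (of length at least 2 for every machine). For $c\in\mathbb{N}^+$, $\mathcal{U}^c$ is a time-bounded universal interpreter (a 2-input-tape, 3-work-tape machine): on $(p,x)$ with $n=|x|$, it checks within $n^c$ steps whether $p=E(T)u$ for a two-input-tape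 machine $T$ and $u\in\mathcal{B}^*$ (outputting $\bot$ if not, or if the check does not finish), then simulates $T$ on $(u,x)$ with an efficient universal simulation (Hennie–Stearns, overhead $O(t\log t)$ for $t$ simulated steps), devoting at most $n^c$ of its own steps to the simulation; it outputs $T$'s output if $T$ halts within this budget and $0$ otherwise. For fixed $p$ it runs in at most $\beta n^c$ steps for a constant $\beta$. In particular, if a Turing machine computes $g:\mathcal{B}^*\to\mathcal{B}$ in time $O(n^{c'})$ with $c'<c$, there is $h\in\mathcal{B}^*$ with $\mathcal{U}^c(h,x)=g(x)$ for all $x$ of sufficiently large length. A Boolean circuit on $n$ inputs is a DAG with a unique sink (output) whose sources are labelled by input indices in $\{1,\dots,n\}$ and whose other vertices (gates) are labelled AND, OR (two incoming edges) or NOT (one incoming edge); its size $|C|$ is its number of vertices. The circuit interpreter $\mathcal{C}$ reads a program $h=0^{\lceil\log_2 n\rceil}1\,[\text{binary expansion of } n]\,0^{|C|}1\,[\text{description of vertex } i]_{i=1}^{|C|}$, each vertex being described by its label and its parents/input index using $\max\{2\lceil\log_2|C|\rceil,\lceil\log_2 n\rceil\}$ bits beyond the label bits, so a circuit $C$ on $n$ inputs has encoding length $L(|C|,n)=2\lceil\log_2 n\rceil+2+|C|(3+\max\{2\lceil\log_2|C|\rceil,\lceil\log_2 n\rceil\})$; $\mathcal{C}(h,x)$ is the circuit's output on $x\in\mathcal{B}^n$, and $\bot$ if $h$ is malformed. Hence $|f|_{\mathcal{C}}=\min\{L(|C|,n): C \text{ computes } f\}$. A language is a subset $L\subseteq\mathcal{B}^*$,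 identified with its indicator function; $L|_n\in H^n$ is its restriction to inputs of length $n$. $\mathbf{E}$ is the class of languages decidable by a deterministic Turing machine in time $2^{O(n)}$. *)

theory Defs
  imports Complex_Main "HOL-Library.Extended_Nat" "HOL-Library.Landau_Symbols"
begin

datatype sym = S0 | S1 | Blank

datatype move = MvL | MvR | MvS

fun mv :: "move \<Rightarrow> int \<Rightarrow> int" where
  "mv MvL h = h - 1" | "mv MvR h = h + 1" | "mv MvS h = h"

text \<open>A rule (q, read, q', write, moves): in state q reading the symbols 'read' under the
  heads of the input tapes followed by the work tapes, go to q', write 'write' on the work
  tapes and move all heads according to 'moves'.\<close>
type_synonym rule = "nat \<times> sym list \<times> nat \<times> sym list \<times> move list"

record tm =
  nin :: nat
  nwk :: nat
  q0 :: nat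
  qacc :: nat
  qrej :: nat
  rules :: "rule list"

record conf =
  cst :: nat
  ihs :: "int list"
  wts :: "(int \<Rightarrow> sym) list"
  whs :: "int list"

definition inp_sym :: "bool list \<Rightarrow> int \<Rightarrow> sym" where
  "inp_sym w i = (if 0 \<le> i \<and> i < int (length w) then (if w ! nat i then S1 else S0) else Blank)"

definition reads :: "bool list list \<Rightarrow> conf \<Rightarrow> sym list" where
  "reads ins c = map2 inp_sym ins (ihs c) @ map2 (\<lambda>t h. t h) (wts c) (whs c)"

definition step :: "tm \<Rightarrow> bool list list \<Rightarrow> conf \<Rightarrow> conf" where
  "step M ins c =
    (if cst c = qacc M \<or> cst c = qrej M then c else
     (case find (\<lambda>(q, rd, _, _, _). q = cst c \<and> rd = reads ins c) (rules M) of
        None \<Rightarrow> c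
      | Some (_, _, q', wr, mvs) \<Rightarrow>
          \<lparr> cst = q',
            ihs = map2 mv (take (nin M) mvs) (ihs c),
            wts = map (\<lambda>((t, h), s). t(h := s)) (zip (zip (wts c) (whs c)) wr),
            whs = map2 mv (drop (nin M) mvs) (whs c) \<rparr>))"

definition init_conf :: "tm \<Rightarrow> conf" where
  "init_conf M = \<lparr> cst = q0 M, ihs = replicate (nin M) 0,
                   wts = replicate (nwk M) (\<lambda>_. Blank), whs = replicate (nwk M) 0 \<rparr>"

definition run :: "tm \<Rightarrow> bool list list \<Rightarrow> nat \<Rightarrow> conf" where
  "run M ins t = (step M ins ^^ t) (init_conf M)"

definition halted :: "tm \<Rightarrow> bool list list \<Rightarrow> nat \<Rightarrow> bool" where
  "halted M ins t \<longleftrightarrow> cst (run M ins t) = qacc M \<or> cst (run M ins t) = qrej M"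

definition halt_time :: "tm \<Rightarrow> bool list list \<Rightarrow> nat" where
  "halt_time M ins = (LEAST t. halted M ins t)"

text \<open>Output: Some True = accept (1), Some False = reject (0), None = \<bottom>.\<close>
definition tm_out :: "tm \<Rightarrow> bool list list \<Rightarrow> bool option" where
  "tm_out M ins = (if \<exists>t. halted M ins t
                   then Some (cst (run M ins (halt_time M ins)) = qacc M) else None)"

definition wf_tm :: "tm \<Rightarrow> bool" where
  "wf_tm M \<longleftrightarrow> qacc M \<noteq> qrej M \<and>
     (\<forall>(q, rd, q', wr, mvs) \<in> set (rules M).
        length rd = nin M + nwk M \<and> length wr = nwk M \<and> length mvs = nin M + nwk M) \<and>
     distinct (map (\<lambda>(q, rd, _, _, _). (q, rd)) (rules M))"

definition tm2 :: "tm \<Rightarrow> bool" where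
  "tm2 T \<longleftrightarrow> wf_tm T \<and> nin T = 2"

definition in_E :: "bool list set \<Rightarrow> bool" where
  "in_E L \<longleftrightarrow> (\<exists>M K. wf_tm M \<and> nin M = 1 \<and>
      (\<forall>x. \<exists>t \<le> K * 2 ^ (K * length x). halted M [x] t \<and>
             (cst (run M [x] t) = qacc M \<longleftrightarrow> x \<in> L)))"

type_synonym interp = "bool list \<Rightarrow> bool list \<Rightarrow> bool option"

text \<open>|f|_phi for f in H^n (f only matters on inputs of length n).\<close>
definition cx :: "interp \<Rightarrow> nat \<Rightarrow> (bool list \<Rightarrow> bool) \<Rightarrow> enat" where
  "cx \<phi> n f = (INF h \<in> {h. \<forall>x. length x = n \<longrightarrow> \<phi> h x = Some (f x)}. enat (length h))"

text \<open>Vertices are listed in a topological order; parents are indices (0-based) of earlier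
  vertices; input vertices carry an index in {1..n}; the output is the last vertex.\<close>
datatype gate = Inp nat | And nat nat | Or nat nat | Not nat

fun parents :: "gate \<Rightarrow> nat set" where
  "parents (Inp j) = {}" | "parents (And a b) = {a, b}" | "parents (Or a b) = {a, b}"
| "parents (Not a) = {a}"

definition wf_circ :: "nat \<Rightarrow> gate list \<Rightarrow> bool" where
  "wf_circ n C \<longleftrightarrow> C \<noteq> [] \<and>
     (\<forall>i < length C. (case C ! i of Inp j \<Rightarrow> 1 \<le> j \<and> j \<le> n | _ \<Rightarrow> (\<forall>a \<in> parents (C ! i). a < i))) \<and>
     (\<forall>i < length C - 1. \<exists>j < length C. i \<in> parents (C ! j))"

fun gval :: "bool list \<Rightarrow> bool list \<Rightarrow> gate \<Rightarrow> bool" where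
  "gval x vs (Inp j) = x ! (j - 1)"
| "gval x vs (And a b) = (vs ! a \<and> vs ! b)"
| "gval x vs (Or a b) = (vs ! a \<or> vs ! b)"
| "gval x vs (Not a) = (\<not> vs ! a)"

definition circ_eval :: "gate list \<Rightarrow> bool list \<Rightarrow> bool" where
  "circ_eval C x = last (foldl (\<lambda>vs g. vs @ [gval x vs g]) [] C)"

definition circ_computes :: "nat \<Rightarrow> gate list \<Rightarrow> (bool list \<Rightarrow> bool) \<Rightarrow> bool" where
  "circ_computes n C f \<longleftrightarrow> wf_circ n C \<and> (\<forall>x. length x = n \<longrightarrow> circ_eval C x = f x)"

definition clog :: "nat \<Rightarrow> nat" where
  "clog k = nat \<lceil>log 2 (real k)\<rceil>"

definition Lc :: "nat \<Rightarrow> nat \<Rightarrow> nat" where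
  "Lc s n = 2 * clog n + 2 + s * (3 + max (2 * clog s) (clog n))"

definition cx_circ :: "nat \<Rightarrow> (bool list \<Rightarrow> bool) \<Rightarrow> enat" where
  "cx_circ n f = (INF C \<in> {C. circ_computes n C f}. enat (Lc (length C) n))"

text \<open>U^c is determined by: a prefix-free encoding E of two-input-tape machines;
  chk c T n = number of own steps the syntactic check of p = E(T)u needs (on inputs x of
  length n); cost c T u x t = number of own steps used to simulate t steps of T on (u,x).\<close>
definition univ :: "(tm \<Rightarrow> bool list) \<Rightarrow> (nat \<Rightarrow> tm \<Rightarrow> nat \<Rightarrow> nat)
    \<Rightarrow> (nat \<Rightarrow> tm \<Rightarrow> bool list \<Rightarrow> bool list \<Rightarrow> nat \<Rightarrow> nat) \<Rightarrow> nat \<Rightarrow> interp" where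
  "univ E chk cost c p x =
    (if \<exists>T u. tm2 T \<and> p = E T @ u then
       (let (T, u) = (THE (T, u). tm2 T \<and> p = E T @ u); n = length x in
        if chk c T n > n ^ c then None
        else if (\<exists>t. halted T [u, x] t) \<and> cost c T u x (halt_time T [u, x]) \<le> n ^ c
        then tm_out T [u, x]
        else Some False)
     else None)"

text \<open>Admissible data: E prefix-free with codewords of length at least 2; the check
  finishes within n^c steps for large n; the simulation has Hennie--Stearns overhead
  O(t log t) (constant depending on T) and costs at least one own step per simulated step.\<close>
definition admissible :: "(tm \<Rightarrow> bool list) \<Rightarrow> (nat \<Rightarrow> tm \<Rightarrow> nat \<Rightarrow> nat)
    \<Rightarrow> (nat \<Rightarrow> tm \<Rightarrow> bool list \<Rightarrow> bool list \<Rightarrow> nat \<Rightarrow> nat) \<Rightarrow> bool" where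
  "admissible E chk cost \<longleftrightarrow>
     (\<forall>T. tm2 T \<longrightarrow> length (E T) \<ge> 2) \<and>
     (\<forall>T T' v. tm2 T \<and> tm2 T' \<and> E T' = E T @ v \<longrightarrow> T = T') \<and>
     (\<forall>c T. c \<ge> 1 \<and> tm2 T \<longrightarrow> (\<forall>\<^sub>F n in sequentially. chk c T n \<le> n ^ c)) \<and>
     (\<forall>c T. tm2 T \<longrightarrow> (\<exists>K::real. \<forall>u x t.
         t \<le> cost c T u x t \<and> real (cost c T u x t) \<le> K * (real t + 1) * log 2 (real t + 2)))"

end

theory Submission
  imports Defs "HOL-Library.FuncSet" "HOL-Real_Asymp.Real_Asymp"
begin

(* Let g be decided by a one-tape machine M in time 2^(Km) and need circuits of size 2^(iota m).
   For m = ceil(a log n) with a = (2 + gamma) / iota, the function x |-> g(first m bits of x) on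
   inputs of length n has the U^c-program E(T) 1^m of length O(log n): T runs M on the first m bits
   of its second input, using the first input 1^m to delimit them, in time 2^(Km) = n^O(1), which
   fits into n^c for c > K a + 1 even with the logarithmic simulation overhead. Fixing all but the
   first m inputs of a circuit for this function yields a circuit for g on m bits, so every such
   circuit has size at least 2^(iota m) >= n^(2 + gamma). The ratio is therefore at least
   n^(2 + gamma) / n. *)

abbreviation rule_match :: "nat \<Rightarrow> sym list \<Rightarrow> rule \<Rightarrow> bool" where
  "rule_match s rd0 \<equiv> (\<lambda>(q, rd, _, _, _). q = s \<and> rd = rd0)"

lemma find_append:
  "find P (xs @ ys) = (case find P xs of None \<Rightarrow> find P ys | Some a \<Rightarrow> Some a)"
  by (induction xs) auto

lemma step_eq_action:
  "step M ins c =
    (if cst c = qacc M \<or> cst c = qrej M then c else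
     (case map_option (snd \<circ> snd) (find (rule_match (cst c) (reads ins c)) (rules M)) of
        None \<Rightarrow> c
      | Some (q', wr, mvs) \<Rightarrow>
          \<lparr> cst = q',
            ihs = map2 mv (take (nin M) mvs) (ihs c),
            wts = map (\<lambda>((t, h), s). t(h := s)) (zip (zip (wts c) (whs c)) wr),
            whs = map2 mv (drop (nin M) mvs) (whs c) \<rparr>))"
  unfolding step_def by (auto split: option.split)

lemma run_halted_stable: "halted M ins t \<Longrightarrow> run M ins (t + k) = run M ins t"
proof (induction k)
  case (Suc k)
  then have "halted M ins (t + k)" unfolding halted_def by simp
  then show ?case using Suc unfolding halted_def run_def by (simp add: step_def)
qed simp

lemma
  assumes "halted M ins t" "cst (run M ins t) = qacc M \<longleftrightarrow> P"
  shows halt_time_le: "halt_time M ins \<le> t"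
    and tm_out_eqI: "tm_out M ins = Some P"
proof -
  show le: "halt_time M ins \<le> t" unfolding halt_time_def using assms(1) by (rule Least_le)
  have "halted M ins (halt_time M ins)" unfolding halt_time_def using assms(1) by (rule LeastI)
  then have "run M ins t = run M ins (halt_time M ins)"
    using run_halted_stable[of M ins "halt_time M ins" "t - halt_time M ins"] le by simp
  then show "tm_out M ins = Some P" unfolding tm_out_def using assms by auto
qed

section \<open>Running a one-tape machine on a prefix of its input\<close>

text \<open>On inputs (1^m, x) the first input tape of truncating_tm M marks the prefix take m x: its
  head moves with the input head of M, a rule of M reading a symbol of x fires where the mark
  tape shows 1, and a rule of M reading a blank fires, whatever x shows, where it is blank.\<close>
fun truncating_rules :: "rule \<Rightarrow> rule list" where
  "truncating_rules (q, rd, q', wr, mvs) =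
     (if hd rd = Blank then map (\<lambda>b. (q, Blank # b # tl rd, q', wr, hd mvs # mvs)) [S0, S1, Blank]
      else [(q, S1 # rd, q', wr, hd mvs # mvs)])"

definition truncating_tm :: "tm \<Rightarrow> tm" where
  "truncating_tm M = \<lparr> nin = 2, nwk = nwk M, q0 = q0 M, qacc = qacc M, qrej = qrej M,
                       rules = concat (map truncating_rules (rules M)) \<rparr>"

definition dup_head_move :: "nat \<times> sym list \<times> move list \<Rightarrow> nat \<times> sym list \<times> move list" where
  "dup_head_move = (\<lambda>(q', wr, mvs). (q', wr, hd mvs # mvs))"

text \<open>The symbol sT under the marker head and the symbol sx of x determine the symbol sy
  that the original machine sees on the truncated input.\<close>
lemma find_truncating_rules:
  assumes sym: "(sT = S1 \<and> sy = sx \<and> sx \<noteq> Blank) \<or> (sT = Blank \<and> sy = Blank)"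
    and nonempty: "\<forall>r \<in> set rs. fst (snd r) \<noteq> []"
  shows "map_option (snd \<circ> snd) (find (rule_match s (sT # sx # W)) (concat (map truncating_rules rs)))
       = map_option (dup_head_move \<circ> snd \<circ> snd) (find (rule_match s (sy # W)) rs)"
  using nonempty
proof (induction rs)
  case (Cons r rs)
  obtain q rd q' wr mvs where r: "r = (q, rd, q', wr, mvs)" by (cases r) auto
  obtain s0 rd' where rd: "rd = s0 # rd'" using Cons.prems r by (cases rd) auto
  have single: "map_option (snd \<circ> snd) (find (rule_match s (sT # sx # W)) (truncating_rules (q, rd, q', wr, mvs)))
      = (if q = s \<and> rd = sy # W then Some (q', wr, hd mvs # mvs) else None)"
    using sym unfolding rd by (cases sx) auto
  show ?case
    using single Cons unfolding r
    by (auto simp add: find_append dup_head_move_def split: option.splits if_splits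
        simp del: truncating_rules.simps)
qed simp

definition sim_conf :: "conf \<Rightarrow> conf \<Rightarrow> bool" where
  "sim_conf cT cM \<longleftrightarrow> cst cT = cst cM \<and> (\<exists>h. ihs cM = [h] \<and> ihs cT = [h, h]) \<and>
     wts cT = wts cM \<and> whs cT = whs cM"

lemma inp_sym_truncate:
  assumes "m \<le> length x"
  shows "(inp_sym (replicate m True) h = S1 \<and> inp_sym (take m x) h = inp_sym x h \<and> inp_sym x h \<noteq> Blank)
       \<or> (inp_sym (replicate m True) h = Blank \<and> inp_sym (take m x) h = Blank)"
  using assms unfolding inp_sym_def by (cases "0 \<le> h \<and> h < int m") auto

lemma wf_tm_rule_nonempty:
  assumes "wf_tm M" "nin M = 1" "(q, rd, q', wr, mvs) \<in> set (rules M)"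
  shows "rd \<noteq> [] \<and> mvs \<noteq> []"
  using assms unfolding wf_tm_def by fastforce

lemma step_sim:
  assumes M: "wf_tm M" "nin M = 1" and mx: "m \<le> length x" and sim: "sim_conf cT cM"
  shows "sim_conf (step (truncating_tm M) [replicate m True, x] cT) (step M [take m x] cM)"
proof -
  obtain h where h: "ihs cM = [h]" "ihs cT = [h, h]" using sim unfolding sim_conf_def by auto
  define W where "W = map2 (\<lambda>t h. t h) (wts cM) (whs cM)"
  have reads: "reads [replicate m True, x] cT = inp_sym (replicate m True) h # inp_sym x h # W"
    "reads [take m x] cM = inp_sym (take m x) h # W"
    using sim h unfolding reads_def W_def sim_conf_def by simp_all
  have nonempty: "\<forall>r \<in> set (rules M). fst (snd r) \<noteq> []"
    using wf_tm_rule_nonempty[OF M] by fastforce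
  let ?action = "map_option (snd \<circ> snd) (find (rule_match (cst cM) (reads [take m x] cM)) (rules M))"
  have actions: "map_option (snd \<circ> snd)
      (find (rule_match (cst cT) (reads [replicate m True, x] cT)) (rules (truncating_tm M)))
      = map_option dup_head_move ?action"
    using find_truncating_rules[OF inp_sym_truncate[OF mx] nonempty] sim
    unfolding reads sim_conf_def by (simp add: truncating_tm_def option.map_comp comp_assoc)
  show ?thesis
  proof (cases ?action)
    case None
    then show ?thesis using sim actions unfolding step_eq_action by (simp add: truncating_tm_def)
  next
    case (Some a)
    obtain q' wr mvs where a: "a = (q', wr, mvs)" by (cases a)
    from Some obtain q rd where "(q, rd, q', wr, mvs) \<in> set (rules M)"
      unfolding a by (auto simp: find_Some_iff) (metis nth_mem)
    then obtain mv0 ms where mvs: "mvs = mv0 # ms"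
      using wf_tm_rule_nonempty[OF M] by (cases mvs) blast+
    have actionT: "map_option (snd \<circ> snd)
        (find (rule_match (cst cT) (reads [replicate m True, x] cT)) (rules (truncating_tm M)))
        = Some (q', wr, mv0 # mvs)"
      using actions Some unfolding a mvs by (simp add: dup_head_move_def)
    show ?thesis
      using sim h M(2) unfolding step_eq_action actionT Some a mvs sim_conf_def
      by (simp add: truncating_tm_def)
  qed
qed

lemma run_sim:
  assumes "wf_tm M" "nin M = 1" "m \<le> length x"
  shows "sim_conf (run (truncating_tm M) [replicate m True, x] t) (run M [take m x] t)"
proof (induction t)
  case 0
  show ?case using assms(2)
    unfolding run_def init_conf_def sim_conf_def truncating_tm_def by (simp add: numeral_2_eq_2)
next
  case (Suc t)
  then show ?case using step_sim[OF assms] unfolding run_def by simp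
qed

definition rule_lhs :: "rule \<Rightarrow> nat \<times> sym list" where
  "rule_lhs = (\<lambda>(q, rd, _, _, _). (q, rd))"

definition untruncate_lhs :: "nat \<times> sym list \<Rightarrow> nat \<times> sym list" where
  "untruncate_lhs = (\<lambda>(q, rd). (q, (if hd rd = Blank then Blank else hd (tl rd)) # tl (tl rd)))"

lemma rule_lhs_truncating_rules:
  assumes "fst (snd r) \<noteq> []" "r' \<in> set (truncating_rules r)"
  shows "untruncate_lhs (rule_lhs r') = rule_lhs r"
  using assms by (cases r) (auto simp: rule_lhs_def untruncate_lhs_def neq_Nil_conv split: if_splits)

lemma distinct_truncating_rules:
  assumes "\<forall>r \<in> set rs. fst (snd r) \<noteq> []" "distinct (map rule_lhs rs)"
  shows "distinct (map rule_lhs (concat (map truncating_rules rs)))"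
  using assms
proof (induction rs)
  case (Cons r rs)
  have "distinct (map rule_lhs (truncating_rules r))"
    using Cons.prems by (cases r) (auto simp: rule_lhs_def)
  moreover have "rule_lhs a \<noteq> rule_lhs b"
    if "a \<in> set (truncating_rules r)" "r2 \<in> set rs" "b \<in> set (truncating_rules r2)" for a b r2
  proof -
    have "rule_lhs r \<noteq> rule_lhs r2" using Cons.prems(2) that(2) by auto
    then show ?thesis
      using rule_lhs_truncating_rules[of r a] rule_lhs_truncating_rules[of r2 b] that Cons.prems(1)
      by (metis list.set_intros)
  qed
  ultimately show ?case using Cons by fastforce
qed simp

lemma tm2_truncating_tm:
  assumes M: "wf_tm M" "nin M = 1"
  shows "tm2 (truncating_tm M)"
proof -
  have nonempty: "\<forall>r \<in> set (rules M). fst (snd r) \<noteq> []"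
    using wf_tm_rule_nonempty[OF M] by fastforce
  have "distinct (map rule_lhs (rules M))"
    using M(1) unfolding wf_tm_def rule_lhs_def by simp
  then have distinct: "distinct (map rule_lhs (concat (map truncating_rules (rules M))))"
    by (rule distinct_truncating_rules[OF nonempty])
  have lengths: "length rd = 2 + nwk M \<and> length wr = nwk M \<and> length mvs = 2 + nwk M"
    if "r \<in> set (rules M)" "(q, rd, q', wr, mvs) \<in> set (truncating_rules r)" for r q rd q' wr mvs
  proof -
    obtain p rd0 p' wr0 mvs0 where r: "r = (p, rd0, p', wr0, mvs0)" by (cases r)
    have "length rd0 = 1 + nwk M \<and> length wr0 = nwk M \<and> length mvs0 = 1 + nwk M"
      using that(1) M unfolding wf_tm_def r by fastforce
    moreover obtain s0 rd' where "rd0 = s0 # rd'"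
      using calculation by (cases rd0) auto
    ultimately show ?thesis using that(2) unfolding r by (auto split: if_splits)
  qed
  have "\<forall>(q, rd, q', wr, mvs) \<in> set (rules (truncating_tm M)).
      length rd = nin (truncating_tm M) + nwk (truncating_tm M) \<and> length wr = nwk (truncating_tm M)
      \<and> length mvs = nin (truncating_tm M) + nwk (truncating_tm M)"
    using lengths by (fastforce simp: truncating_tm_def)
  moreover have "distinct (map (\<lambda>(q, rd, _, _, _). (q, rd)) (rules (truncating_tm M)))"
    using distinct unfolding rule_lhs_def by (simp add: truncating_tm_def)
  moreover have "qacc (truncating_tm M) \<noteq> qrej (truncating_tm M)" "nin (truncating_tm M) = 2"
    using M(1) by (simp_all add: truncating_tm_def wf_tm_def)
  ultimately show ?thesis unfolding tm2_def wf_tm_def by blast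
qed

lemma halted_truncating_tm:
  assumes "wf_tm M" "nin M = 1" "m \<le> length x"
  shows "halted (truncating_tm M) [replicate m True, x] = halted M [take m x]"
  using run_sim[OF assms] unfolding halted_def sim_conf_def fun_eq_iff by (simp add: truncating_tm_def)

lemma
  assumes "wf_tm M" "nin M = 1" "m \<le> length x"
  shows halt_time_truncating_tm: "halt_time (truncating_tm M) [replicate m True, x] = halt_time M [take m x]"
    and tm_out_truncating_tm: "tm_out (truncating_tm M) [replicate m True, x] = tm_out M [take m x]"
  using halted_truncating_tm[OF assms] run_sim[OF assms]
  unfolding halt_time_def tm_out_def sim_conf_def by (simp_all add: truncating_tm_def)

section \<open>Circuits\<close>

datatype formula = Var nat | Conj formula formula | Neg formula

fun feval :: "bool list \<Rightarrow> formula \<Rightarrow> bool" where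
  "feval x (Var j) = x ! (j - 1)"
| "feval x (Conj a b) = (feval x a \<and> feval x b)"
| "feval x (Neg a) = (\<not> feval x a)"

fun fvars :: "formula \<Rightarrow> nat set" where
  "fvars (Var j) = {j}"
| "fvars (Conj a b) = fvars a \<union> fvars b"
| "fvars (Neg a) = fvars a"

fun fsize :: "formula \<Rightarrow> nat" where
  "fsize (Var j) = 1"
| "fsize (Conj a b) = fsize a + fsize b + 1"
| "fsize (Neg a) = fsize a + 1"

lemma fsize_pos: "0 < fsize a"
  by (cases a) auto

text \<open>compile a k places the gates of a at the positions k, k + 1, ..., the root last.\<close>
fun compile :: "formula \<Rightarrow> nat \<Rightarrow> gate list" where
  "compile (Var j) k = [Inp j]"
| "compile (Conj a b) k =
     compile a k @ compile b (k + fsize a) @ [And (k + fsize a - 1) (k + fsize a + fsize b - 1)]"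
| "compile (Neg a) k = compile a k @ [Not (k + fsize a - 1)]"

lemma length_compile [simp]: "length (compile a k) = fsize a"
  by (induction a arbitrary: k) auto

definition eval_gates :: "bool list \<Rightarrow> bool list \<Rightarrow> gate list \<Rightarrow> bool list" where
  "eval_gates x = foldl (\<lambda>vs g. vs @ [gval x vs g])"

lemma eval_gates_simps [simp]:
  "eval_gates x vs [] = vs"
  "eval_gates x vs (C @ D) = eval_gates x (eval_gates x vs C) D"
  "eval_gates x vs [g] = vs @ [gval x vs g]"
  unfolding eval_gates_def by simp_all

lemma eval_compile:
  assumes "length vs = k"
  shows "\<exists>ws. eval_gates x vs (compile a k) = vs @ ws \<and> length ws = fsize a \<and> last ws = feval x a"
  using assms
proof (induction a arbitrary: k vs)
  case (Var j)
  then show ?case by simp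
next
  case (Conj a b)
  obtain wa where wa: "eval_gates x vs (compile a k) = vs @ wa" "length wa = fsize a" "last wa = feval x a"
    using Conj.IH(1)[OF Conj.prems] by blast
  obtain wb where wb: "eval_gates x (vs @ wa) (compile b (k + fsize a)) = (vs @ wa) @ wb"
      "length wb = fsize b" "last wb = feval x b"
    using Conj.IH(2)[of "vs @ wa"] Conj.prems wa(2) by auto
  have pos: "wa \<noteq> []" "wb \<noteq> []" "0 < length wa" "0 < length wb"
    using wa(2) wb(2) fsize_pos[of a] fsize_pos[of b] by auto
  have "(vs @ wa @ wb) ! (k + fsize a - 1) = last wa"
    using pos Conj.prems wa(2) by (auto simp: nth_append last_conv_nth)
  moreover have "(vs @ wa @ wb) ! (k + fsize a + fsize b - 1) = last wb"
    using pos Conj.prems wa(2) wb(2) by (auto simp: nth_append last_conv_nth)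
  ultimately show ?case using wa wb by simp
next
  case (Neg a)
  obtain wa where wa: "eval_gates x vs (compile a k) = vs @ wa" "length wa = fsize a" "last wa = feval x a"
    using Neg.IH[OF Neg.prems] by blast
  have "wa \<noteq> []" "0 < length wa" using wa(2) fsize_pos[of a] by auto
  then have "(vs @ wa) ! (k + fsize a - 1) = last wa"
    using Neg.prems wa(2) by (auto simp: nth_append last_conv_nth)
  then show ?case using wa by simp
qed

definition gate_ok :: "nat set \<Rightarrow> nat \<Rightarrow> gate \<Rightarrow> bool" where
  "gate_ok V i g \<longleftrightarrow> (case g of Inp j \<Rightarrow> j \<in> V | _ \<Rightarrow> (\<forall>a \<in> parents g. a < i))"

definition gates_ok :: "nat set \<Rightarrow> nat \<Rightarrow> gate list \<Rightarrow> bool" where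
  "gates_ok V k C \<longleftrightarrow> (\<forall>i < length C. gate_ok V (k + i) (C ! i))"

lemma all_less_add_iff: "(\<forall>i < m + (n::nat). P i) \<longleftrightarrow> (\<forall>i < m. P i) \<and> (\<forall>j < n. P (m + j))"
proof safe
  fix i assume "\<forall>i < m. P i" "\<forall>j < n. P (m + j)" "i < m + n"
  then show "P i" by (cases "i < m") (auto dest: spec[of _ "i - m"])
qed auto

lemma gates_ok_append [simp]:
  "gates_ok V k (C @ D) \<longleftrightarrow> gates_ok V k C \<and> gates_ok V (k + length C) D"
  unfolding gates_ok_def length_append all_less_add_iff by (simp add: nth_append add.assoc)

lemma gates_ok_single [simp]: "gates_ok V k [g] \<longleftrightarrow> gate_ok V k g"
  unfolding gates_ok_def by simp

lemma gates_ok_mono: "gates_ok V k C \<Longrightarrow> V \<subseteq> W \<Longrightarrow> gates_ok W k C"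
  unfolding gates_ok_def gate_ok_def by (auto split: gate.splits)

lemma wf_compile:
  "gates_ok (fvars a) k (compile a k) \<and> {k..<k + fsize a - 1} \<subseteq> \<Union> (parents ` set (compile a k))"
proof (induction a arbitrary: k)
  case (Var j)
  then show ?case by (simp add: gate_ok_def)
next
  case (Conj a b)
  have pos: "0 < fsize a" "0 < fsize b" by (rule fsize_pos)+
  have "gates_ok (fvars (Conj a b)) k (compile (Conj a b) k)"
    using Conj.IH[of k] Conj.IH(2)[of "k + fsize a"] pos
    by (auto simp: gate_ok_def intro: gates_ok_mono)
  moreover have "{k..<k + fsize (Conj a b) - 1} \<subseteq>
      {k..<k + fsize a - 1} \<union> {k + fsize a - 1} \<union> {k + fsize a..<k + fsize a + fsize b - 1} \<union> {k + fsize a + fsize b - 1}"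
    using pos by auto
  ultimately show ?case using Conj.IH[of k] Conj.IH(2)[of "k + fsize a"] by auto
next
  case (Neg a)
  have pos: "0 < fsize a" by (rule fsize_pos)
  then have "{k..<k + fsize (Neg a) - 1} \<subseteq> {k..<k + fsize a - 1} \<union> {k + fsize a - 1}"
    by auto
  then show ?case using Neg.IH[of k] pos by (auto simp: gate_ok_def)
qed

lemma circ_computes_compile:
  assumes "fvars a \<subseteq> {1..n}" "\<forall>x. length x = n \<longrightarrow> feval x a = f x"
  shows "circ_computes n (compile a 0) f"
proof -
  let ?C = "compile a 0"
  have gates: "gates_ok {1..n} 0 ?C"
    using wf_compile[of a 0] assms(1) by (blast intro: gates_ok_mono)
  have used: "{0..<length ?C - 1} \<subseteq> \<Union> (parents ` set ?C)"
    using wf_compile[of a 0] by simp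
  have "wf_circ n ?C"
    unfolding wf_circ_def
  proof (intro conjI allI impI)
    show "?C \<noteq> []" using fsize_pos[of a] by (metis length_compile less_irrefl list.size(3))
  next
    fix i assume "i < length ?C"
    then show "case ?C ! i of Inp j \<Rightarrow> 1 \<le> j \<and> j \<le> n | _ \<Rightarrow> \<forall>a \<in> parents (?C ! i). a < i"
      using gates unfolding gates_ok_def gate_ok_def by (auto split: gate.splits)
  next
    fix i assume "i < length ?C - 1"
    then obtain g where "g \<in> set ?C" "i \<in> parents g" using used by auto
    then show "\<exists>j < length ?C. i \<in> parents (?C ! j)" by (metis in_set_conv_nth)
  qed
  moreover have "circ_eval (compile a 0) x = feval x a" for x
    using eval_compile[of "[]" 0 x a] unfolding circ_eval_def eval_gates_def by auto
  ultimately show ?thesis using assms(2) unfolding circ_computes_def by simp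
qed

definition ffalse :: formula where
  "ffalse = Conj (Var 1) (Neg (Var 1))"

definition fdisj :: "formula \<Rightarrow> formula \<Rightarrow> formula" where
  "fdisj a b = Neg (Conj (Neg a) (Neg b))"

fun minterm :: "bool list \<Rightarrow> nat \<Rightarrow> formula" where
  "minterm [] k = Neg ffalse"
| "minterm (b # bs) k = Conj (if b then Var k else Neg (Var k)) (minterm bs (Suc k))"

definition dnf :: "bool list list \<Rightarrow> formula" where
  "dnf zs = foldr (\<lambda>z. fdisj (minterm z 1)) zs ffalse"

lemma feval_minterm: "1 \<le> k \<Longrightarrow> feval x (minterm z k) \<longleftrightarrow> (\<forall>i < length z. x ! (k - 1 + i) = z ! i)"
proof (induction z arbitrary: k)
  case (Cons b bs)
  then show ?case
    unfolding length_Cons All_less_Suc2 by (auto simp: add.commute)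
qed (simp add: ffalse_def)

lemma fvars_minterm: "1 \<le> k \<Longrightarrow> fvars (minterm z k) \<subseteq> {1} \<union> {k..<k + length z}"
proof (induction z arbitrary: k)
  case (Cons b bs)
  then show ?case using Cons.IH[of "Suc k"] by auto
qed (simp add: ffalse_def)

lemma feval_dnf: "feval x (dnf zs) \<longleftrightarrow> (\<exists>z \<in> set zs. feval x (minterm z 1))"
  unfolding dnf_def by (induction zs) (auto simp: ffalse_def fdisj_def)

lemma fvars_dnf: "\<forall>z \<in> set zs. length z = n \<Longrightarrow> 1 \<le> n \<Longrightarrow> fvars (dnf zs) \<subseteq> {1..n}"
  unfolding dnf_def
proof (induction zs)
  case (Cons z zs)
  then show ?case using fvars_minterm[of 1 z] by (auto simp: fdisj_def)
qed (auto simp: ffalse_def)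

lemma circ_exists:
  assumes "1 \<le> n"
  shows "\<exists>C. circ_computes n C f"
proof -
  define zs where "zs = filter f (List.n_lists n [True, False])"
  have lengths: "\<forall>z \<in> set zs. length z = n"
    unfolding zs_def using length_n_lists_elem by auto
  have "feval x (dnf zs) = f x" if x: "length x = n" for x
  proof
    assume "feval x (dnf zs)"
    then obtain z where z: "z \<in> set zs" "feval x (minterm z 1)" unfolding feval_dnf by auto
    then have "x = z" using feval_minterm[of 1 x z] lengths x by (intro nth_equalityI) auto
    then show "f x" using z(1) unfolding zs_def by simp
  next
    assume "f x"
    then have "x \<in> set zs" unfolding zs_def using x by (auto simp: set_n_lists)
    then show "feval x (dnf zs)" unfolding feval_dnf using feval_minterm[of 1 x x] by auto
  qed
  then show ?thesis using circ_computes_compile[OF fvars_dnf[OF lengths assms]] by blast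
qed

text \<open>Inputs beyond m are wired to input 1; this is correct on the extension of z by copies
  of its first bit.\<close>
fun rewire_inputs :: "nat \<Rightarrow> gate \<Rightarrow> gate" where
  "rewire_inputs m (Inp j) = Inp (if j \<le> m then j else 1)"
| "rewire_inputs m g = g"

lemma parents_rewire_inputs [simp]: "parents (rewire_inputs m g) = parents g"
  by (cases g) auto

lemma eval_gates_rewire_inputs:
  assumes "\<forall>g \<in> set C. case g of Inp j \<Rightarrow> 1 \<le> j \<and> j \<le> n | _ \<Rightarrow> True"
    and "length z = m" "1 \<le> m" "m \<le> n"
  shows "eval_gates z vs (map (rewire_inputs m) C) = eval_gates (z @ replicate (n - m) (z ! 0)) vs C"
  using assms(1)
proof (induction C arbitrary: vs rule: rev_induct)
  case (snoc g C)
  have "gval z vs (rewire_inputs m g) = gval (z @ replicate (n - m) (z ! 0)) vs g" for vs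
    using snoc.prems assms(2-4) by (cases g) (auto simp: nth_append)
  then show ?case using snoc by simp
qed simp

lemma circ_computes_prefix:
  assumes C: "circ_computes n C f" and m: "1 \<le> m" "m \<le> n"
    and f: "\<forall>x. length x = n \<longrightarrow> f x = P (take m x)"
  shows "circ_computes m (map (rewire_inputs m) C) P"
proof -
  have wf: "wf_circ n C" using C unfolding circ_computes_def by simp
  have inputs: "\<forall>g \<in> set C. case g of Inp j \<Rightarrow> 1 \<le> j \<and> j \<le> n | _ \<Rightarrow> True"
    using wf unfolding wf_circ_def by (fastforce simp: in_set_conv_nth split: gate.splits)
  let ?D = "map (rewire_inputs m) C"
  have "wf_circ m ?D"
    unfolding wf_circ_def
  proof (intro conjI allI impI)
    show "?D \<noteq> []" using wf unfolding wf_circ_def by simp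
  next
    fix i assume i: "i < length ?D"
    then have "case C ! i of Inp j \<Rightarrow> 1 \<le> j \<and> j \<le> n | _ \<Rightarrow> (\<forall>a \<in> parents (C ! i). a < i)"
      using wf unfolding wf_circ_def by simp
    then show "case ?D ! i of Inp j \<Rightarrow> 1 \<le> j \<and> j \<le> m | _ \<Rightarrow> (\<forall>a \<in> parents (?D ! i). a < i)"
      using i m by (cases "C ! i") auto
  next
    fix i assume "i < length ?D - 1"
    then obtain j where "j < length C" "i \<in> parents (C ! j)" using wf unfolding wf_circ_def by auto
    then show "\<exists>j < length ?D. i \<in> parents (?D ! j)" by auto
  qed
  moreover have "circ_eval ?D z = P z" if z: "length z = m" for z
  proof -
    define x where "x = z @ replicate (n - m) (z ! 0)"
    have "length x = n" "take m x = z" using z m unfolding x_def by simp_all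
    then show ?thesis
      using C f eval_gates_rewire_inputs[OF inputs z m, of "[]"]
      unfolding circ_computes_def circ_eval_def eval_gates_def x_def by simp
  qed
  ultimately show ?thesis unfolding circ_computes_def by simp
qed

lemma cx_le_length:
  assumes "\<forall>x. length x = n \<longrightarrow> \<phi> h x = Some (f x)"
  shows "cx \<phi> n f \<le> enat (length h)"
  unfolding cx_def using assms by (intro INF_lower) simp

lemma cx_attained:
  assumes "cx \<phi> n f < \<infinity>"
  obtains h where "\<forall>x. length x = n \<longrightarrow> \<phi> h x = Some (f x)" "cx \<phi> n f = enat (length h)"
proof -
  let ?H = "{h. \<forall>x. length x = n \<longrightarrow> \<phi> h x = Some (f x)}"
  have "?H \<noteq> {}"
  proof
    assume empty: "?H = {}"
    have "cx \<phi> n f = \<infinity>" unfolding cx_def empty by (simp add: top_enat_def)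
    with assms show False by simp
  qed
  then obtain h0 where h0: "h0 \<in> ?H" by blast
  have "cx \<phi> n f \<in> (\<lambda>h. enat (length h)) ` ?H"
    unfolding cx_def by (rule wellorder_InfI[OF imageI[OF h0]])
  then show ?thesis using that by blast
qed

lemma le_Lc: "s \<le> Lc s n"
proof -
  have "s * 1 \<le> s * (3 + max (2 * clog s) (clog n))" by (rule mult_le_mono2) simp
  then show ?thesis unfolding Lc_def by linarith
qed

text \<open>circ_exists makes the infimum attained; otherwise the_enat would be applied to \<infinity>.\<close>
lemma cx_circ_ge:
  assumes "1 \<le> n" and lower: "\<forall>C. circ_computes n C f \<longrightarrow> L \<le> real (length C)"
  shows "L \<le> real (the_enat (cx_circ n f))"
proof -
  obtain C1 where "circ_computes n C1 f" using circ_exists[OF assms(1)] by blast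
  then have "cx_circ n f \<in> (\<lambda>C. enat (Lc (length C) n)) ` {C. circ_computes n C f}"
    unfolding cx_circ_def by (intro wellorder_InfI) auto
  then obtain C where "circ_computes n C f" "cx_circ n f = enat (Lc (length C) n)" by auto
  then have "L \<le> real (length C)" "cx_circ n f = enat (Lc (length C) n)" using lower by auto
  then show ?thesis using le_Lc[of "length C" n] by simp
qed

definition circ_ratio :: "interp \<Rightarrow> nat \<Rightarrow> (bool list \<Rightarrow> bool) \<Rightarrow> real" where
  "circ_ratio \<phi> n f = real (the_enat (cx_circ n f)) / real (the_enat (cx \<phi> n f))"

lemma circ_ratio_restrict: "circ_ratio \<phi> n (restrict f {x. length x = n}) = circ_ratio \<phi> n f"
  unfolding circ_ratio_def cx_def cx_circ_def circ_computes_def by simp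

lemma finite_circ_ratio_image: "finite (circ_ratio \<phi> n ` A)"
proof -
  have "circ_ratio \<phi> n ` A \<subseteq> circ_ratio \<phi> n ` ({x. length x = n} \<rightarrow>\<^sub>E UNIV)"
    by (auto simp: image_iff intro!: bexI[of _ "restrict _ {x. length x = n}"] circ_ratio_restrict[symmetric])
  moreover have "finite ({x :: bool list. length x = n} \<rightarrow>\<^sub>E (UNIV :: bool set))"
    using finite_lists_length_eq[of "UNIV :: bool set" n] by (intro finite_PiE) simp_all
  ultimately show ?thesis by (meson finite_imageI finite_subset)
qed

lemma circ_ratio_le_Sup: "f \<in> A \<Longrightarrow> circ_ratio \<phi> n f \<le> Sup (circ_ratio \<phi> n ` A)"
  by (intro cSup_upper imageI bdd_above_finite finite_circ_ratio_image)

lemma univ_length_ge_2: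
  assumes "admissible E chk cost" and "univ E chk cost c h x \<noteq> None"
  shows "2 \<le> length h"
proof -
  from assms(2) obtain T u where "tm2 T" "h = E T @ u" unfolding univ_def by (auto split: if_splits)
  then show ?thesis using assms(1) unfolding admissible_def by fastforce
qed

lemma univ_code:
  assumes adm: "admissible E chk cost" and T: "tm2 T"
    and chk: "chk c T (length x) \<le> length x ^ c"
    and halts: "\<exists>t. halted T [u, x] t"
    and cost: "cost c T u x (halt_time T [u, x]) \<le> length x ^ c"
  shows "univ E chk cost c (E T @ u) x = tm_out T [u, x]"
proof -
  have prefix_free: "\<forall>T T' v. tm2 T \<and> tm2 T' \<and> E T' = E T @ v \<longrightarrow> T = T'"
    using adm unfolding admissible_def by blast
  have "(T', u') = (T, u)" if "tm2 T'" "E T @ u = E T' @ u'" for T' u'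
  proof -
    from that(2) obtain us where "E T = E T' @ us \<or> E T @ us = E T'"
      by (auto simp: append_eq_append_conv2)
    then have "T' = T" using prefix_free T that(1) by (elim disjE) (blast, metis)
    then show ?thesis using that by simp
  qed
  then have "(THE (T', u'). tm2 T' \<and> E T @ u = E T' @ u') = (T, u)"
    using T by (intro the_equality) auto
  then show ?thesis unfolding univ_def using T chk halts cost by auto
qed

definition decides_in_exp_time :: "tm \<Rightarrow> nat \<Rightarrow> bool list set \<Rightarrow> bool" where
  "decides_in_exp_time M K g \<longleftrightarrow> (\<forall>y. \<exists>t \<le> K * 2 ^ (K * length y).
     halted M [y] t \<and> (cst (run M [y] t) = qacc M \<longleftrightarrow> y \<in> g))"

lemma univ_decides_prefix:
  assumes adm: "admissible E chk cost" and M: "wf_tm M" "nin M = 1"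
    and dec: "decides_in_exp_time M K g"
    and m: "m \<le> length x"
    and chk: "chk c (truncating_tm M) (length x) \<le> length x ^ c"
    and cost: "\<forall>t \<le> K * 2 ^ (K * m). cost c (truncating_tm M) (replicate m True) x t \<le> length x ^ c"
  shows "univ E chk cost c (E (truncating_tm M) @ replicate m True) x = Some (take m x \<in> g)"
proof -
  obtain t where t: "t \<le> K * 2 ^ (K * m)" "halted M [take m x] t"
      "cst (run M [take m x] t) = qacc M \<longleftrightarrow> take m x \<in> g"
    using dec m unfolding decides_in_exp_time_def by (metis length_take min.absorb2)
  have "halted (truncating_tm M) [replicate m True, x] t"
    using t(2) halted_truncating_tm[OF M m] by simp
  moreover have "halt_time (truncating_tm M) [replicate m True, x] \<le> K * 2 ^ (K * m)"
    using halt_time_le[OF t(2,3)] halt_time_truncating_tm[OF M m] t(1) by simp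
  ultimately have "univ E chk cost c (E (truncating_tm M) @ replicate m True) x
      = tm_out (truncating_tm M) [replicate m True, x]"
    using univ_code[OF adm tm2_truncating_tm[OF M] chk] cost by blast
  then show ?thesis using tm_out_eqI[OF t(2,3)] tm_out_truncating_tm[OF M m] by simp
qed

section \<open>Asymptotic estimates\<close>

lemma eventually_log_le: "\<forall>\<^sub>F n in sequentially. A + B * log 2 (real n) \<le> real n"
proof -
  have "\<forall>\<^sub>F x in at_top. A + B * log 2 x \<le> x" by real_asymp
  then show ?thesis by (rule eventually_compose_filterlim[OF _ filterlim_real_sequentially])
qed

definition prefix_len :: "real \<Rightarrow> nat \<Rightarrow> nat" where
  "prefix_len a n = nat \<lceil>a * log 2 (real n)\<rceil>"

lemma prefix_len_bounds:
  assumes "0 < a" "2 \<le> n"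
  shows "a * log 2 (real n) \<le> real (prefix_len a n)" "real (prefix_len a n) \<le> a * log 2 (real n) + 1"
    and "1 \<le> prefix_len a n"
proof -
  have "0 < a * log 2 (real n)" using assms by simp
  then show "a * log 2 (real n) \<le> real (prefix_len a n)" "real (prefix_len a n) \<le> a * log 2 (real n) + 1"
      "1 \<le> prefix_len a n"
    unfolding prefix_len_def by linarith+
qed

lemma powr_le_two_powr:
  assumes "1 \<le> N" "e * log 2 N \<le> \<iota> * m"
  shows "N powr e \<le> 2 powr (\<iota> * m)"
proof -
  have "N powr e = (2 powr log 2 N) powr e" using assms(1) by simp
  also have "\<dots> = 2 powr (e * log 2 N)" by (simp add: powr_powr mult.commute)
  also have "\<dots> \<le> 2 powr (\<iota> * m)" using assms(2) by simp
  finally show ?thesis .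
qed

lemma exp_time_le_poly:
  fixes K m :: nat and a N :: real
  assumes "1 \<le> N" "real m \<le> a * log 2 N + 1"
  shows "real (K * 2 ^ (K * m)) \<le> real K * 2 ^ K * N powr (real K * a)"
proof -
  have "real (2 ^ (K * m)) = 2 powr (real K * real m)"
    by (simp add: powr_realpow[symmetric])
  also have "\<dots> \<le> 2 powr (real K * (a * log 2 N + 1))"
    using assms(2) by (intro powr_mono mult_left_mono) auto
  also have "\<dots> = (2 powr log 2 N) powr (real K * a) * 2 powr real K"
    by (simp add: powr_add powr_powr algebra_simps)
  also have "\<dots> = 2 ^ K * N powr (real K * a)"
    using assms(1) by (simp add: powr_realpow)
  finally have pow: "real (2 ^ (K * m)) \<le> 2 ^ K * N powr (real K * a)" .
  show ?thesis using mult_left_mono[OF pow, of "real K"] by (simp add: mult.assoc)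
qed

lemma t_log_t_le_powr:
  fixes N K' B e t c :: real
  assumes N: "1 \<le> N" and e: "0 \<le> e" and K': "0 \<le> K'" and B: "2 \<le> B" and t: "0 \<le> t"
    and time: "t + 2 \<le> B * N powr e"
    and large: "K' * B * log 2 B + K' * B * e * log 2 N \<le> N" and c: "e + 1 \<le> c"
  shows "K' * (t + 1) * log 2 (t + 2) \<le> N powr c"
proof -
  have "log 2 (t + 2) \<le> log 2 (B * N powr e)" using time t by simp
  also have "\<dots> = log 2 B + e * log 2 N" using B N by (simp add: log_mult log_powr)
  finally have "log 2 (t + 2) \<le> log 2 B + e * log 2 N" .
  then have "K' * (t + 1) * log 2 (t + 2) \<le> K' * (B * N powr e) * (log 2 B + e * log 2 N)"
    using time t K' by (intro mult_mono mult_left_mono) auto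
  also have "\<dots> = N powr e * (K' * B * log 2 B + K' * B * e * log 2 N)"
    by (simp add: algebra_simps)
  also have "\<dots> \<le> N powr e * N" using large by (intro mult_left_mono) auto
  also have "\<dots> = N powr (e + 1)" using N by (simp add: powr_add)
  also have "\<dots> \<le> N powr c" using N c by (intro powr_mono) auto
  finally show ?thesis .
qed

lemma sim_cost_le_poly:
  fixes K' a :: real and K m n c s t :: nat
  defines "B \<equiv> real K * 2 ^ K + 2"
  assumes K': "0 \<le> K'" and a: "0 \<le> a" and n: "1 \<le> n" and m: "real m \<le> a * log 2 (real n) + 1"
    and large: "K' * B * log 2 B + K' * B * (real K * a) * log 2 (real n) \<le> real n"
    and c: "real K * a + 1 \<le> real c"
    and t: "t \<le> K * 2 ^ (K * m)" and s: "real s \<le> K' * (real t + 1) * log 2 (real t + 2)"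
  shows "s \<le> n ^ c"
proof -
  have N: "1 \<le> real n" using n by simp
  have "real t \<le> real K * 2 ^ K * real n powr (real K * a)"
    using t exp_time_le_poly[OF N m, of K] by linarith
  moreover have "1 \<le> real n powr (real K * a)" using N a by (simp add: ge_one_powr_ge_zero)
  ultimately have "real t + 2 \<le> B * real n powr (real K * a)" unfolding B_def by (simp add: algebra_simps)
  then have "K' * (real t + 1) * log 2 (real t + 2) \<le> real n powr real c"
    using t_log_t_le_powr[OF N _ K' _ _ _ large c] a unfolding B_def by simp
  also have "\<dots> = real (n ^ c)" using N by (simp add: powr_realpow)
  finally show ?thesis using s by linarith
qed

lemma eventually_univ_decides_prefix:
  assumes adm: "admissible E chk cost" and M: "wf_tm M" "nin M = 1"
    and dec: "decides_in_exp_time M K g"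
    and a: "0 < a" and c: "real K * a + 1 \<le> real c"
  shows "\<forall>\<^sub>F n in sequentially. \<forall>x. length x = n \<longrightarrow>
           univ E chk cost c (E (truncating_tm M) @ replicate (prefix_len a n) True) x
             = Some (take (prefix_len a n) x \<in> g)"
proof -
  let ?T = "truncating_tm M"
  define B :: real where "B = real K * 2 ^ K + 2"
  have T: "tm2 ?T" using tm2_truncating_tm[OF M] .
  have "1 \<le> c" using a c by (smt (verit) mult_nonneg_nonneg of_nat_0_le_iff of_nat_le_iff of_nat_1)
  then have chk: "\<forall>\<^sub>F n in sequentially. chk c ?T n \<le> n ^ c"
    using adm T unfolding admissible_def by blast
  obtain K' where K': "\<forall>u x t. t \<le> cost c ?T u x t \<and>
      real (cost c ?T u x t) \<le> K' * (real t + 1) * log 2 (real t + 2)"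
    using adm T unfolding admissible_def by blast
  have "real (cost c ?T [] [] 0) \<le> K' * (real 0 + 1) * log 2 (real 0 + 2)" using K' by blast
  then have K'0: "0 \<le> K'" by simp
  show ?thesis
    using chk eventually_ge_at_top[of 2] eventually_log_le[of 1 a]
      eventually_log_le[of "K' * B * log 2 B" "K' * B * (real K * a)"]
  proof eventually_elim
    case (elim n)
    let ?m = "prefix_len a n"
    have m: "real ?m \<le> a * log 2 (real n) + 1" using prefix_len_bounds[OF a elim(2)] by simp
    have "\<forall>t \<le> K * 2 ^ (K * ?m). cost c ?T (replicate ?m True) x t \<le> n ^ c" for x
      using sim_cost_le_poly[OF K'0 _ _ m elim(4)[unfolded B_def] c] K' a elim(2) by auto
    moreover have "?m \<le> n" using m elim(3) by linarith
    ultimately show ?case using univ_decides_prefix[OF adm M dec] elim(1) by simp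
  qed
qed

lemma Sup_circ_ratio_ge:
  assumes adm: "admissible E chk cost"
    and prog: "\<forall>x. length x = n \<longrightarrow> univ E chk cost c h x = Some (take m x \<in> g)"
    and hard: "\<forall>C. circ_computes m C (\<lambda>x. x \<in> g) \<longrightarrow> L \<le> real (length C)"
    and m: "1 \<le> m" "m \<le> n" and L: "0 \<le> L"
  shows "L / real (length h)
           \<le> Sup (circ_ratio (univ E chk cost c) n ` {f. cx (univ E chk cost c) n f < \<infinity>})"
proof -
  let ?\<phi> = "univ E chk cost c"
  let ?f = "\<lambda>x. take m x \<in> g"
  have le_h: "cx ?\<phi> n ?f \<le> enat (length h)" using prog by (rule cx_le_length)
  then have finite: "cx ?\<phi> n ?f < \<infinity>" using enat_ord_simps(4) le_less_trans by blast
  then obtain h0 where h0: "\<forall>x. length x = n \<longrightarrow> ?\<phi> h0 x = Some (?f x)" "cx ?\<phi> n ?f = enat (length h0)"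
    by (rule cx_attained)
  have "2 \<le> length h0" using univ_length_ge_2[OF adm, of c h0 "replicate n False"] h0(1) by simp
  moreover have "length h0 \<le> length h" using le_h h0(2) by simp
  ultimately have "L / real (length h) \<le> L / real (length h0)"
    using L by (intro divide_left_mono mult_pos_pos) auto
  moreover have "L \<le> real (the_enat (cx_circ n ?f))"
  proof (rule cx_circ_ge)
    show "\<forall>C. circ_computes n C ?f \<longrightarrow> L \<le> real (length C)"
      using hard circ_computes_prefix[OF _ m, of _ ?f "\<lambda>x. x \<in> g"] by fastforce
  qed (use m in simp)
  then have "L / real (length h0) \<le> circ_ratio ?\<phi> n ?f"
    unfolding circ_ratio_def h0(2) the_enat.simps by (rule divide_right_mono) simp
  ultimately have "L / real (length h) \<le> circ_ratio ?\<phi> n ?f" by linarith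
  also have "\<dots> \<le> Sup (circ_ratio ?\<phi> n ` {f. cx ?\<phi> n f < \<infinity>})"
    using finite by (intro circ_ratio_le_Sup) simp
  finally show ?thesis .
qed

lemma powr_le_Sup_circ_ratio:
  assumes adm: "admissible E chk cost" and \<iota>: "0 < \<iota>" and a: "0 < a" and n: "2 \<le> n"
    and prog: "\<forall>x. length x = n \<longrightarrow>
      univ E chk cost c (code @ replicate (prefix_len a n) True) x = Some (take (prefix_len a n) x \<in> g)"
    and hard: "\<forall>m \<ge> 1. \<forall>C. circ_computes m C (\<lambda>x. x \<in> g) \<longrightarrow> 2 powr (\<iota> * real m) \<le> real (length C)"
    and short: "real (length code) + 1 + a * log 2 (real n) \<le> real n"
  shows "real n powr (\<iota> * a - 1) \<le> Sup (circ_ratio (univ E chk cost c) n ` {f. cx (univ E chk cost c) n f < \<infinity>})"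
proof -
  let ?m = "prefix_len a n" and ?h = "code @ replicate (prefix_len a n) True"
  have m: "a * log 2 n \<le> ?m" "1 \<le> ?m" "real (length ?h) \<le> real n"
    using prefix_len_bounds[OF a n] short by auto
  then have "?m \<le> n" by simp
  have "real n powr (\<iota> * a - 1) = real n powr (\<iota> * a) / real n"
    using n by (simp add: powr_diff)
  also have "\<dots> \<le> 2 powr (\<iota> * ?m) / real (length ?h)"
  proof (rule frac_le)
    have "\<iota> * a * log 2 (real n) \<le> \<iota> * ?m"
      using mult_left_mono[OF m(1), of \<iota>] \<iota> by (simp add: mult.assoc)
    then show "real n powr (\<iota> * a) \<le> 2 powr (\<iota> * ?m)"
      using n by (intro powr_le_two_powr) auto
    show "0 < real (length ?h)" using m(2) by simp
  qed (use m in simp_all)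
  also have "\<dots> \<le> Sup (circ_ratio (univ E chk cost c) n ` {f. cx (univ E chk cost c) n f < \<infinity>})"
    by (rule Sup_circ_ratio_ge[OF adm prog]) (use hard m \<open>?m \<le> n\<close> in simp_all)
  finally show ?thesis .
qed

theorem mainTheorem15:
  fixes E :: "tm \<Rightarrow> bool list"
    and chk :: "nat \<Rightarrow> tm \<Rightarrow> nat \<Rightarrow> nat"
    and cost :: "nat \<Rightarrow> tm \<Rightarrow> bool list \<Rightarrow> bool list \<Rightarrow> nat \<Rightarrow> nat"
  assumes adm: "admissible E chk cost"
    and hard: "\<exists>g \<iota>. in_E g \<and> \<iota> > (0::real) \<and>
                 (\<forall>n \<ge> 1. \<forall>C. circ_computes n C (\<lambda>x. x \<in> g) \<longrightarrow> 2 powr (\<iota> * real n) \<le> real (length C))"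
  shows "\<forall>\<gamma> > (0::real). \<exists>c::nat. c \<ge> 1 \<and>
           (\<lambda>n::nat. Sup ((\<lambda>f. real (the_enat (cx_circ n f)) / real (the_enat (cx (univ E chk cost c) n f)))
                            ` {f. cx (univ E chk cost c) n f < \<infinity>}))
           \<in> \<Omega>(\<lambda>n. real n powr (1 + \<gamma>))"
proof (intro allI impI)
  fix \<gamma> :: real assume "\<gamma> > 0"
  obtain g \<iota> where "in_E g" "\<iota> > 0" and hard_g:
      "\<forall>m \<ge> 1. \<forall>C. circ_computes m C (\<lambda>x. x \<in> g) \<longrightarrow> 2 powr (\<iota> * real m) \<le> real (length C)"
    using hard by blast
  then obtain M K where M: "wf_tm M" "nin M = 1" and dec: "decides_in_exp_time M K g"
    unfolding in_E_def decides_in_exp_time_def by blast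
  define a where "a = (2 + \<gamma>) / \<iota>"
  define c where "c = nat \<lceil>real K * a\<rceil> + 1"
  have a: "0 < a" and exponent: "\<iota> * a - 1 = 1 + \<gamma>" using \<open>\<gamma> > 0\<close> \<open>\<iota> > 0\<close> by (simp_all add: a_def)
  have c: "real K * a + 1 \<le> real c" unfolding c_def by linarith
  let ?\<phi> = "univ E chk cost c"
  have "\<forall>\<^sub>F n in sequentially. real n powr (1 + \<gamma>) \<le> Sup (circ_ratio ?\<phi> n ` {f. cx ?\<phi> n f < \<infinity>})"
    using eventually_univ_decides_prefix[OF adm M dec a c] eventually_ge_at_top[of 2]
      eventually_log_le[of "real (length (E (truncating_tm M))) + 1" a]
    by eventually_elim (use powr_le_Sup_circ_ratio[OF adm \<open>\<iota> > 0\<close> a _ _ hard_g] exponent in auto)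
  then have "(\<lambda>n. Sup (circ_ratio ?\<phi> n ` {f. cx ?\<phi> n f < \<infinity>})) \<in> \<Omega>(\<lambda>n. real n powr (1 + \<gamma>))"
    by (intro landau_omega.big_mono) (auto elim!: eventually_mono)
  moreover have "1 \<le> c" by (simp add: c_def)
  ultimately show "\<exists>c \<ge> 1. (\<lambda>n. Sup ((\<lambda>f. real (the_enat (cx_circ n f)) / real (the_enat (cx (univ E chk cost c) n f)))
      ` {f. cx (univ E chk cost c) n f < \<infinity>})) \<in> \<Omega>(\<lambda>n. real n powr (1 + \<gamma>))"
    unfolding circ_ratio_def[abs_def] by blast
qed

end
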